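(* (1) Every symmetric intersecting family is balanceable. (2) There exists a family (of subsets of some finite set) that is uniform and balanceable but not regular (and hence not symmetric). (3) There exists a family that is uniform, regular and intersecting but not balanceable.
   Context: Let $P$ be a finite set with $|P|=n$ (identified with $[n]$). A family $\mathcal{F}=(F_1,\dots,F_m)$ of subsets of $P$ is: intersecting if any two of its sets intersect; regular if every element of $P$ lies in the same number of sets of $\mathcal{F}$; uniform if all its sets have the same size; symmetric if for any $p,q\in P$ there is a bijection $\varphi:P\to P$ with $\varphi(p)=q$ and $\{\varphi(A):A\in\mathcal{F}\}=\mathcal{F}$; balanceable if there exist $w\in[0,1]^m$ with $\sum_i w_i=1$ and $s\in[0,1]^{m\times m\times n}$ with $\sum_p s_{ijp}=1$ for all $i,j$, such that (intersecting system) $s_{ijp}>0$ implies $p\in F_i\cap F_j$ for all $i,j,p$, and (balanced) $\sum_{i=1}^m\sum_{j=1}^m w_iw_js_{ijp}=1/n$ for all $p\in P$. *)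

theory Defs
  imports Complex_Main
begin

text \<open>Ground set P = {0..<n} (identified with [n]); a family F_1,...,F_m is a list
  of subsets of P (repetitions allowed), F_i = F ! (i-1).\<close>

definition family_on :: "nat \<Rightarrow> nat set list \<Rightarrow> bool" where
  "family_on n F \<longleftrightarrow> (\<forall>A \<in> set F. A \<subseteq> {..<n})"

definition intersecting :: "nat set list \<Rightarrow> bool" where
  "intersecting F \<longleftrightarrow> (\<forall>i<length F. \<forall>j<length F. F ! i \<inter> F ! j \<noteq> {})"

definition regular :: "nat \<Rightarrow> nat set list \<Rightarrow> bool" where
  "regular n F \<longleftrightarrow> (\<exists>k. \<forall>p<n. card {i. i < length F \<and> p \<in> F ! i} = k)"

definition uniform :: "nat set list \<Rightarrow> bool" where
  "uniform F \<longleftrightarrow> (\<exists>k. \<forall>i<length F. card (F ! i) = k)"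

definition symmetric :: "nat \<Rightarrow> nat set list \<Rightarrow> bool" where
  "symmetric n F \<longleftrightarrow> (\<forall>p<n. \<forall>q<n. \<exists>\<phi>. bij_betw \<phi> {..<n} {..<n} \<and> \<phi> p = q \<and>
      (\<lambda>A. \<phi> ` A) ` set F = set F)"

definition balanceable :: "nat \<Rightarrow> nat set list \<Rightarrow> bool" where
  "balanceable n F \<longleftrightarrow> (let m = length F in
    \<exists>(w :: nat \<Rightarrow> real) (s :: nat \<Rightarrow> nat \<Rightarrow> nat \<Rightarrow> real).
      (\<forall>i<m. 0 \<le> w i \<and> w i \<le> 1) \<and> (\<Sum>i<m. w i) = 1 \<and>
      (\<forall>i<m. \<forall>j<m. \<forall>p<n. 0 \<le> s i j p \<and> s i j p \<le> 1) \<and>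
      (\<forall>i<m. \<forall>j<m. (\<Sum>p<n. s i j p) = 1) \<and>
      (\<forall>i<m. \<forall>j<m. \<forall>p<n. s i j p > 0 \<longrightarrow> p \<in> F ! i \<inter> F ! j) \<and>
      (\<forall>p<n. (\<Sum>i<m. \<Sum>j<m. w i * w j * s i j p) = 1 / real n))"

end

(*
  Symmetric intersecting families: give every distinct set the same weight, and for each
  pair of sets pick some common point.  Averaging this choice over the automorphism group of
  the family keeps every pair's distribution inside the intersection, and makes the total mass
  received by a point invariant under the group.  Symmetry means the group is transitive, so
  that mass is the same at every point, i.e. the weights are balanced.

  In the non-balanceable example, points 0, 1, 2 lie only in the first two sets, so the mass
  3/10 they must receive comes from pairs of these two sets and is at most the square of their
  total weight; the same holds for points 3, 4, 5 and the last two sets.  Both total weights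
  would then exceed 1/2.
*)

theory Submission
  imports Defs "HOL-Combinatorics.Permutations"
begin

definition distribution_on :: "'a set \<Rightarrow> 'a set \<Rightarrow> ('a \<Rightarrow> real) \<Rightarrow> bool" where
  "distribution_on U X d \<longleftrightarrow>
     (\<forall>p\<in>U. 0 \<le> d p) \<and> (\<forall>p\<in>U. 0 < d p \<longrightarrow> p \<in> X) \<and> sum d U = 1"

lemma distribution_on_le_one:
  assumes "finite U" "distribution_on U X d" "p \<in> U"
  shows "d p \<le> 1"
proof -
  have "d p \<le> sum d U"
    using assms by (intro member_le_sum) (auto simp: distribution_on_def)
  then show ?thesis
    using assms(2) by (simp add: distribution_on_def)
qed

lemma distribution_on_point:
  assumes "finite U" "x \<in> U" "x \<in> X"
  shows "distribution_on U X (\<lambda>p. if p = x then 1 else 0)"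
  using assms by (auto simp: distribution_on_def)

definition balancing ::
    "nat \<Rightarrow> nat set list \<Rightarrow> (nat \<Rightarrow> real) \<Rightarrow> (nat \<Rightarrow> nat \<Rightarrow> nat \<Rightarrow> real) \<Rightarrow> bool" where
  "balancing n F w s \<longleftrightarrow>
     (\<forall>i<length F. 0 \<le> w i) \<and> (\<Sum>i<length F. w i) = 1 \<and>
     (\<forall>i<length F. \<forall>j<length F. distribution_on {..<n} (F ! i \<inter> F ! j) (s i j)) \<and>
     (\<forall>p<n. (\<Sum>i<length F. \<Sum>j<length F. w i * w j * s i j p) = 1 / real n)"

lemma balanceable_iff_balancing: "balanceable n F \<longleftrightarrow> (\<exists>w s. balancing n F w s)"
proof
  assume "balanceable n F"
  then obtain w s where
      "\<forall>i<length F. 0 \<le> w i \<and> w i \<le> 1" "(\<Sum>i<length F. w i) = 1"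
      "\<forall>i<length F. \<forall>j<length F. \<forall>p<n. 0 \<le> s i j p \<and> s i j p \<le> 1"
      "\<forall>i<length F. \<forall>j<length F. (\<Sum>p<n. s i j p) = 1"
      "\<forall>i<length F. \<forall>j<length F. \<forall>p<n. s i j p > 0 \<longrightarrow> p \<in> F ! i \<inter> F ! j"
      "\<forall>p<n. (\<Sum>i<length F. \<Sum>j<length F. w i * w j * s i j p) = 1 / real n"
    unfolding balanceable_def Let_def by blast
  then have "balancing n F w s"
    by (simp add: balancing_def distribution_on_def)
  then show "\<exists>w s. balancing n F w s" by blast
next
  assume "\<exists>w s. balancing n F w s"
  then obtain w s where ws: "balancing n F w s" by blast
  have "w i \<le> 1" if "i < length F" for i
    using ws that member_le_sum[of i "{..<length F}" w] by (auto simp: balancing_def)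
  moreover have "s i j p \<le> 1" if "i < length F" "j < length F" "p < n" for i j p
    using ws that distribution_on_le_one[of "{..<n}" _ "s i j" p] by (auto simp: balancing_def)
  ultimately show "balanceable n F"
    using ws unfolding balanceable_def balancing_def distribution_on_def Let_def
    by (intro exI[of _ w] exI[of _ s]) simp
qed

lemma sum_nth_div_multiplicity:
  fixes f :: "'a \<Rightarrow> 'b :: field_char_0"
  shows "(\<Sum>i<length xs. f (xs ! i) / of_nat (card {j. j < length xs \<and> xs ! j = xs ! i}))
         = (\<Sum>x\<in>set xs. f x)"
proof -
  let ?M = "\<lambda>x. {j. j < length xs \<and> xs ! j = x}"
  let ?g = "\<lambda>i. f (xs ! i) / of_nat (card (?M (xs ! i)))"
  have "(\<Sum>i<length xs. ?g i)
        = (\<Sum>x\<in>(!) xs ` {..<length xs}. \<Sum>i\<in>{i \<in> {..<length xs}. xs ! i = x}. ?g i)"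
    by (rule sum.image_gen) simp
  also have "\<dots> = (\<Sum>x\<in>set xs. \<Sum>i\<in>?M x. f x / of_nat (card (?M x)))"
    by (intro sum.cong) (auto simp: in_set_conv_nth)
  also have "\<dots> = (\<Sum>x\<in>set xs. f x)"
  proof (intro sum.cong refl)
    fix x assume "x \<in> set xs"
    then have "card (?M x) \<noteq> 0" by (auto simp: in_set_conv_nth)
    then show "(\<Sum>i\<in>?M x. f x / of_nat (card (?M x))) = f x" by simp
  qed
  finally show ?thesis .
qed

lemma balanceable_of_set_weights:
  fixes v :: "nat set \<Rightarrow> real" and t :: "nat set \<Rightarrow> nat set \<Rightarrow> nat \<Rightarrow> real"
  assumes v_nonneg: "\<forall>A\<in>set F. 0 \<le> v A" and v_sum: "(\<Sum>A\<in>set F. v A) = 1"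
    and t_distr: "\<forall>A\<in>set F. \<forall>B\<in>set F. distribution_on {..<n} (A \<inter> B) (t A B)"
    and balanced: "\<forall>p<n. (\<Sum>A\<in>set F. \<Sum>B\<in>set F. v A * v B * t A B p) = 1 / real n"
  shows "balanceable n F"
proof -
  define w where "w i = v (F ! i) / real (card {j. j < length F \<and> F ! j = F ! i})" for i
  define s where "s i j = t (F ! i) (F ! j)" for i j
  have reweight: "(\<Sum>i<length F. w i * f (F ! i)) = (\<Sum>A\<in>set F. v A * f A)" for f
    using sum_nth_div_multiplicity[of "\<lambda>A. v A * f A" F] by (simp add: w_def field_simps)
  have double_sum: "(\<Sum>i<length F. \<Sum>j<length F. w i * w j * s i j p)
        = (\<Sum>A\<in>set F. \<Sum>B\<in>set F. v A * v B * t A B p)" for p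
  proof -
    have "(\<Sum>i<length F. \<Sum>j<length F. w i * w j * s i j p)
          = (\<Sum>i<length F. w i * (\<Sum>j<length F. w j * t (F ! i) (F ! j) p))"
      by (simp add: s_def sum_distrib_left mult.assoc)
    also have "\<dots> = (\<Sum>i<length F. w i * (\<Sum>B\<in>set F. v B * t (F ! i) B p))"
      using reweight[of "\<lambda>B. t _ B p"] by simp
    also have "\<dots> = (\<Sum>A\<in>set F. \<Sum>B\<in>set F. v A * v B * t A B p)"
      using reweight[of "\<lambda>A. \<Sum>B\<in>set F. v B * t A B p"] by (simp add: sum_distrib_left mult.assoc)
    finally show ?thesis .
  qed
  have "balancing n F w s"
    unfolding balancing_def
  proof (intro conjI)
    show "\<forall>i<length F. 0 \<le> w i"
      using v_nonneg by (simp add: w_def)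
    show "(\<Sum>i<length F. w i) = 1"
      using reweight[of "\<lambda>_. 1"] v_sum by simp
    show "\<forall>i<length F. \<forall>j<length F. distribution_on {..<n} (F ! i \<inter> F ! j) (s i j)"
      using t_distr by (simp add: s_def)
    show "\<forall>p<n. (\<Sum>i<length F. \<Sum>j<length F. w i * w j * s i j p) = 1 / real n"
      using balanced by (simp only: double_sum)
  qed
  then show ?thesis
    unfolding balanceable_iff_balancing by blast
qed

definition automorphisms :: "'a set \<Rightarrow> 'a set set \<Rightarrow> ('a \<Rightarrow> 'a) set" where
  "automorphisms U S = {g. g permutes U \<and> (`) g ` S = S}"

lemma finite_automorphisms: "finite U \<Longrightarrow> finite (automorphisms U S)"
  unfolding automorphisms_def
  by (rule finite_subset[OF _ finite_permutations]) auto

lemma id_in_automorphisms: "id \<in> automorphisms U S"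
  by (simp add: automorphisms_def)

lemma automorphisms_comp:
  assumes "g \<in> automorphisms U S" "h \<in> automorphisms U S"
  shows "g \<circ> h \<in> automorphisms U S"
proof -
  have "(`) (g \<circ> h) ` S = (`) g ` (`) h ` S"
    by (simp add: image_comp)
  then show ?thesis
    using assms by (auto simp: automorphisms_def permutes_compose)
qed

lemma bij_betw_image_automorphism:
  assumes "g \<in> automorphisms U S"
  shows "bij_betw ((`) g) S S"
proof -
  have "inj g"
    using assms by (auto simp: automorphisms_def permutes_inj)
  then have "inj_on ((`) g) S"
    by (auto intro!: inj_onI simp: inj_image_eq_iff)
  with assms show ?thesis
    by (simp add: bij_betw_def automorphisms_def)
qed

lemma sum_automorphisms_comp_right:
  assumes "finite U" "h \<in> automorphisms U S"
  shows "(\<Sum>g\<in>automorphisms U S. f (g \<circ> h)) = (\<Sum>g\<in>automorphisms U S. f g)"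
proof -
  let ?G = "automorphisms U S"
  have "surj h"
    using assms(2) by (auto simp: automorphisms_def permutes_surj)
  then have "inj_on (\<lambda>g. g \<circ> h) ?G"
    by (intro inj_onI surj_fun_eq[of h UNIV]) simp_all
  moreover have "(\<lambda>g. g \<circ> h) ` ?G = ?G"
    using assms by (intro endo_inj_surj finite_automorphisms calculation) (auto intro: automorphisms_comp)
  ultimately show ?thesis
    using sum.reindex[of "\<lambda>g. g \<circ> h" ?G f] by simp
qed

definition group_average ::
    "('a \<Rightarrow> 'a) set \<Rightarrow> ('a set \<Rightarrow> 'a set \<Rightarrow> 'a \<Rightarrow> real) \<Rightarrow>
      'a set \<Rightarrow> 'a set \<Rightarrow> 'a \<Rightarrow> real" where
  "group_average G t A B p = (\<Sum>g\<in>G. t (g ` A) (g ` B) (g p)) / real (card G)"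

lemma group_average_automorphism:
  assumes "finite U" "h \<in> automorphisms U S"
  shows "group_average (automorphisms U S) t (h ` A) (h ` B) (h p)
         = group_average (automorphisms U S) t A B p"
  using sum_automorphisms_comp_right[OF assms, of "\<lambda>g. t (g ` A) (g ` B) (g p)"]
  by (simp add: group_average_def image_comp)

lemma distribution_on_group_average:
  assumes U: "finite U" and AB: "A \<in> S" "B \<in> S"
    and t: "\<forall>A\<in>S. \<forall>B\<in>S. distribution_on U (A \<inter> B) (t A B)"
  shows "distribution_on U (A \<inter> B) (group_average (automorphisms U S) t A B)"
proof -
  let ?G = "automorphisms U S"
  let ?f = "\<lambda>p g. t (g ` A) (g ` B) (g p)"
  have G: "g permutes U" "g ` A \<in> S" "g ` B \<in> S" if "g \<in> ?G" for g
    using that AB by (auto simp: automorphisms_def)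
  have card_G: "card ?G > 0"
    using finite_automorphisms[OF U] id_in_automorphisms by (auto simp: card_gt_0_iff)
  have f_nonneg: "0 \<le> ?f p g" if "p \<in> U" "g \<in> ?G" for p g
    using t G[OF that(2)] permutes_in_image[OF G(1)[OF that(2)]] that(1)
    by (auto simp: distribution_on_def)
  have f_sum: "(\<Sum>p\<in>U. ?f p g) = 1" if "g \<in> ?G" for g
    using sum.permute[OF G(1)[OF that], of "t (g ` A) (g ` B)"] t G[OF that]
    by (simp add: distribution_on_def comp_def)
  have f_support: "p \<in> A \<inter> B" if "p \<in> U" "g \<in> ?G" "0 < ?f p g" for p g
  proof -
    have "g p \<in> g ` A \<inter> g ` B"
      using t G[OF that(2)] permutes_in_image[OF G(1)[OF that(2)]] that(1,3)
      by (auto simp: distribution_on_def)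
    then show "p \<in> A \<inter> B"
      using permutes_inj[OF G(1)[OF that(2)]] by (auto simp: inj_image_mem_iff)
  qed
  have average_support: "\<exists>g\<in>?G. 0 < ?f p g" if "0 < group_average ?G t A B p" for p
  proof (rule ccontr)
    assume "\<not> (\<exists>g\<in>?G. 0 < ?f p g)"
    then have "(\<Sum>g\<in>?G. ?f p g) \<le> 0"
      by (intro sum_nonpos) auto
    then have "group_average ?G t A B p \<le> 0"
      unfolding group_average_def by (rule divide_nonpos_nonneg) simp
    with that show False
      by simp
  qed
  have "(\<Sum>p\<in>U. group_average ?G t A B p) = (\<Sum>g\<in>?G. \<Sum>p\<in>U. ?f p g) / real (card ?G)"
    unfolding group_average_def by (subst sum.swap) (simp add: sum_divide_distrib)
  also have "\<dots> = 1"
    using card_G f_sum by simp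
  finally have "(\<Sum>p\<in>U. group_average ?G t A B p) = 1" .
  moreover have "0 \<le> group_average ?G t A B p" if "p \<in> U" for p
    using f_nonneg[OF that] by (simp add: group_average_def sum_nonneg)
  moreover have "p \<in> A \<inter> B" if "p \<in> U" "0 < group_average ?G t A B p" for p
    using average_support[OF that(2)] f_support[OF that(1)] by blast
  ultimately show ?thesis
    unfolding distribution_on_def by blast
qed

lemma sum_pairs_group_average_automorphism:
  assumes "finite U" "h \<in> automorphisms U S"
  shows "(\<Sum>A\<in>S. \<Sum>B\<in>S. group_average (automorphisms U S) t A B (h p))
         = (\<Sum>A\<in>S. \<Sum>B\<in>S. group_average (automorphisms U S) t A B p)"
proof -
  let ?t = "group_average (automorphisms U S) t"
  have bij: "bij_betw ((`) h) S S"
    using assms(2) by (rule bij_betw_image_automorphism)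
  have "(\<Sum>A\<in>S. \<Sum>B\<in>S. ?t A B (h p)) = (\<Sum>A\<in>S. \<Sum>B\<in>S. ?t (h ` A) B (h p))"
    using sum.reindex_bij_betw[OF bij, of "\<lambda>A. \<Sum>B\<in>S. ?t A B (h p)"] by simp
  also have "\<dots> = (\<Sum>A\<in>S. \<Sum>B\<in>S. ?t (h ` A) (h ` B) (h p))"
    by (rule sum.cong[OF refl], rule sum.reindex_bij_betw[OF bij, symmetric])
  also have "\<dots> = (\<Sum>A\<in>S. \<Sum>B\<in>S. ?t A B p)"
    by (simp add: group_average_automorphism[OF assms])
  finally show ?thesis .
qed

lemma transitive_intersecting_balanced_distributions:
  assumes U: "finite U" and S: "\<forall>A\<in>S. A \<subseteq> U" "\<forall>A\<in>S. \<forall>B\<in>S. A \<inter> B \<noteq> {}"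
    and transitive: "\<forall>p\<in>U. \<forall>q\<in>U. \<exists>h\<in>automorphisms U S. h p = q"
  obtains t where "\<forall>A\<in>S. \<forall>B\<in>S. distribution_on U (A \<inter> B) (t A B)"
    and "\<forall>p\<in>U. (\<Sum>A\<in>S. \<Sum>B\<in>S. t A B p) = real (card S) ^ 2 / real (card U)"
proof -
  define t0 :: "'a set \<Rightarrow> 'a set \<Rightarrow> 'a \<Rightarrow> real"
    where "t0 A B = (\<lambda>p. if p = (SOME p. p \<in> A \<inter> B) then 1 else 0)" for A B
  define t where "t = group_average (automorphisms U S) t0"
  define mass where "mass p = (\<Sum>A\<in>S. \<Sum>B\<in>S. t A B p)" for p
  have "distribution_on U (A \<inter> B) (t0 A B)" if "A \<in> S" "B \<in> S" for A B
  proof -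
    have "(SOME p. p \<in> A \<inter> B) \<in> A \<inter> B"
      unfolding some_in_eq using S(2) that by blast
    then show ?thesis
      unfolding t0_def using S(1) that by (intro distribution_on_point U) auto
  qed
  then have t: "\<forall>A\<in>S. \<forall>B\<in>S. distribution_on U (A \<inter> B) (t A B)"
    unfolding t_def using U by (blast intro: distribution_on_group_average)
  have mass_total: "(\<Sum>p\<in>U. mass p) = real (card S) ^ 2"
  proof -
    have "(\<Sum>p\<in>U. mass p) = (\<Sum>A\<in>S. \<Sum>B\<in>S. \<Sum>p\<in>U. t A B p)"
      unfolding mass_def by (subst sum.swap) (simp add: sum.swap[of _ U])
    also have "\<dots> = real (card S) ^ 2"
      using t by (simp add: distribution_on_def power2_eq_square)
    finally show ?thesis .
  qed
  have "mass p = real (card S) ^ 2 / real (card U)" if "p \<in> U" for p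
  proof -
    have "mass q = mass p" if "q \<in> U" for q
    proof -
      obtain h where "h \<in> automorphisms U S" "h p = q"
        using transitive \<open>p \<in> U\<close> \<open>q \<in> U\<close> by blast
      then show ?thesis
        using sum_pairs_group_average_automorphism[OF U, of h S t0 p] by (simp add: mass_def t_def)
    qed
    then have "real (card U) * mass p = real (card S) ^ 2"
      using mass_total by simp
    moreover have "card U > 0"
      using U that by (auto simp: card_gt_0_iff)
    ultimately show ?thesis
      by (simp add: field_simps)
  qed
  with t show ?thesis
    using that unfolding mass_def by blast
qed

lemma symmetric_imp_transitive_automorphisms:
  assumes "family_on n F" "symmetric n F" "p < n" "q < n"
  shows "\<exists>h\<in>automorphisms {..<n} (set F). h p = q"
proof -
  obtain \<phi> where \<phi>: "bij_betw \<phi> {..<n} {..<n}" "\<phi> p = q" "(`) \<phi> ` set F = set F"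
    using assms(2-4) unfolding symmetric_def by blast
  define h where "h x = (if x < n then \<phi> x else x)" for x
  have "bij_betw h {..<n} {..<n}"
    using \<phi>(1) by (rule bij_betw_cong[THEN iffD1, rotated]) (simp add: h_def)
  then have "h permutes {..<n}"
    by (rule bij_imp_permutes) (simp add: h_def)
  moreover have "(`) h ` set F = set F"
  proof -
    have "h ` A = \<phi> ` A" if "A \<in> set F" for A
      using assms(1) that by (auto simp: family_on_def h_def)
    then show ?thesis
      using \<phi>(3) by (simp cong: image_cong)
  qed
  moreover have "h p = q"
    using \<phi>(2) assms(3) by (simp add: h_def)
  ultimately show ?thesis
    by (auto simp: automorphisms_def)
qed

lemma symmetric_intersecting_imp_balanceable:
  assumes fam: "family_on n F" and "F \<noteq> []" and sym: "symmetric n F" and int: "intersecting F"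
  shows "balanceable n F"
proof -
  let ?k = "real (card (set F))"
  have "\<forall>A\<in>set F. \<forall>B\<in>set F. A \<inter> B \<noteq> {}"
    using int by (auto simp: intersecting_def in_set_conv_nth)
  then obtain t where t: "\<forall>A\<in>set F. \<forall>B\<in>set F. distribution_on {..<n} (A \<inter> B) (t A B)"
    and mass: "\<forall>p\<in>{..<n}. (\<Sum>A\<in>set F. \<Sum>B\<in>set F. t A B p) = ?k ^ 2 / real n"
    using transitive_intersecting_balanced_distributions[of "{..<n}" "set F"]
      symmetric_imp_transitive_automorphisms[OF fam sym] fam
    by (auto simp: family_on_def)
  show ?thesis
  proof (rule balanceable_of_set_weights[where v = "\<lambda>_. 1 / ?k"])
    show "(\<Sum>A\<in>set F. 1 / ?k) = 1"
      using \<open>F \<noteq> []\<close> by simp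
    show "\<forall>p<n. (\<Sum>A\<in>set F. \<Sum>B\<in>set F. 1 / ?k * (1 / ?k) * t A B p) = 1 / real n"
    proof (intro allI impI)
      fix p assume "p < n"
      have "(\<Sum>A\<in>set F. \<Sum>B\<in>set F. 1 / ?k * (1 / ?k) * t A B p)
            = (\<Sum>A\<in>set F. \<Sum>B\<in>set F. t A B p) / ?k ^ 2"
        by (simp add: sum_divide_distrib power2_eq_square)
      also have "\<dots> = 1 / real n"
        using mass \<open>p < n\<close> \<open>F \<noteq> []\<close> by simp
      finally show "(\<Sum>A\<in>set F. \<Sum>B\<in>set F. 1 / ?k * (1 / ?k) * t A B p) = 1 / real n" .
    qed
  qed (use t in auto)
qed

lemma exists_uniform_balanceable_not_regular_not_symmetric:
  "\<exists>n F. family_on n F \<and> uniform F \<and> balanceable n F \<and> \<not> regular n F \<and> \<not> symmetric n F"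
proof -
  define F :: "nat set list" where "F = [{0,1,2}, {0,1,3}, {0,2,3}]"
  have "family_on 4 F"
    by (auto simp: family_on_def F_def)
  moreover have "uniform F"
    unfolding uniform_def by (rule exI[of _ 3]) (auto simp: F_def less_Suc_eq)
  moreover have "\<not> regular 4 F"
  proof
    assume "regular 4 F"
    then obtain k where "\<forall>p<4. length (filter ((\<in>) p) F) = k"
      by (auto simp: regular_def length_filter_conv_card)
    then have "length (filter ((\<in>) 0) F) = length (filter ((\<in>) 1) F)"
      by simp
    then show False
      by (simp add: F_def)
  qed
  moreover have "\<not> symmetric 4 F"
  proof
    assume "symmetric 4 F"
    then have "\<exists>\<phi>. bij_betw \<phi> {..<4} {..<4} \<and> \<phi> 0 = 1 \<and> (`) \<phi> ` set F = set F"
      unfolding symmetric_def by simp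
    then obtain \<phi> where \<phi>: "\<phi> 0 = 1" "(`) \<phi> ` set F = set F"
      by blast
    have "{0,2,3} \<in> (`) \<phi> ` set F"
      unfolding \<phi>(2) by (simp add: F_def)
    then obtain A where "A \<in> set F" "{0,2,3} = \<phi> ` A"
      by (rule imageE)
    moreover have "0 \<in> A"
      using \<open>A \<in> set F\<close> by (auto simp: F_def)
    ultimately have "\<phi> 0 \<in> {0,2,3}"
      by simp
    then show False
      using \<phi>(1) by simp
  qed
  moreover have "balanceable 4 F"
  proof -
    \<comment> \<open>Two distinct sets meet in 0 and i + j; each of 1, 2, 3 receives 1/4 from one
      diagonal term and 2 from off-diagonal terms, 0 receives 3 * 3/4, all weighted by 1/9.\<close>
    define s :: "nat \<Rightarrow> nat \<Rightarrow> nat \<Rightarrow> real" where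
      "s i j p = (if i = j then (if p = 0 then 3/4 else if p = [1,3,2] ! i then 1/4 else 0)
                  else if p = i + j then 1 else 0)" for i j p
    have lt4: "{..<4} = {0,1,2,3 :: nat}"
      by auto
    show ?thesis
      unfolding balanceable_def Let_def
      by (intro exI[of _ "\<lambda>_. 1/3"] exI[of _ s]) (simp add: F_def s_def lt4 less_Suc_eq)
  qed
  ultimately show ?thesis
    by blast
qed

lemma balancing_card_le_square_weight:
  assumes bal: "balancing n F w s" and X: "X \<subseteq> {..<n}"
  shows "real (card X) / real n \<le> (\<Sum>i\<in>{i. i < length F \<and> F ! i \<inter> X \<noteq> {}}. w i) ^ 2"
proof -
  let ?m = "length F" and ?I = "{i. i < length F \<and> F ! i \<inter> X \<noteq> {}}"
  let ?g = "\<lambda>p i j. w i * w j * s i j p"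
  have w: "\<forall>i<?m. 0 \<le> w i"
    and s: "\<forall>i<?m. \<forall>j<?m. distribution_on {..<n} (F ! i \<inter> F ! j) (s i j)"
    and mass: "\<forall>p<n. (\<Sum>i<?m. \<Sum>j<?m. ?g p i j) = 1 / real n"
    using bal by (simp_all add: balancing_def)
  have vanish: "s i j p = 0" if "i < ?m" "j < ?m" "p \<in> X" "i \<notin> ?I \<or> j \<notin> ?I" for i j p
  proof -
    have "p < n" "0 \<le> s i j p" "0 < s i j p \<longrightarrow> p \<in> F ! i \<inter> F ! j"
      using s that X by (auto simp: distribution_on_def)
    then show ?thesis
      using that by force
  qed
  have restrict: "(\<Sum>i<?m. \<Sum>j<?m. ?g p i j) = (\<Sum>i\<in>?I. \<Sum>j\<in>?I. ?g p i j)" if "p \<in> X" for p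
  proof -
    have "(\<Sum>i<?m. \<Sum>j<?m. ?g p i j) = (\<Sum>i\<in>?I. \<Sum>j<?m. ?g p i j)"
      by (rule sum.mono_neutral_right) (auto simp: vanish that)
    also have "\<dots> = (\<Sum>i\<in>?I. \<Sum>j\<in>?I. ?g p i j)"
      by (intro sum.cong refl sum.mono_neutral_right) (auto simp: vanish that)
    finally show ?thesis .
  qed
  have s_le: "(\<Sum>p\<in>X. s i j p) \<le> 1" if "i < ?m" "j < ?m" for i j
  proof -
    have "(\<Sum>p\<in>X. s i j p) \<le> (\<Sum>p<n. s i j p)"
      using s that X by (intro sum_mono2) (auto simp: distribution_on_def)
    then show ?thesis
      using s that by (simp add: distribution_on_def)
  qed
  have "real (card X) / real n = (\<Sum>p\<in>X. \<Sum>i<?m. \<Sum>j<?m. ?g p i j)"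
    using mass X by (simp add: subset_eq)
  also have "\<dots> = (\<Sum>i\<in>?I. \<Sum>j\<in>?I. w i * w j * (\<Sum>p\<in>X. s i j p))"
    by (simp add: restrict sum_distrib_left sum.swap[of _ X])
  also have "\<dots> \<le> (\<Sum>i\<in>?I. \<Sum>j\<in>?I. w i * w j)"
    using w s_le by (intro sum_mono mult_left_le) auto
  also have "\<dots> = (\<Sum>i\<in>?I. w i) ^ 2"
    by (simp add: power2_eq_square sum_product)
  finally show ?thesis .
qed

lemma half_lt_of_square_ge:
  fixes x :: real
  assumes "0 \<le> x" "3 / 10 \<le> x ^ 2"
  shows "1 / 2 < x"
proof (rule ccontr)
  assume "\<not> 1 / 2 < x"
  then have "x ^ 2 \<le> (1 / 2) ^ 2"
    using assms(1) by (intro power_mono) auto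
  then have "x ^ 2 \<le> 1 / 4"
    by (simp add: power_divide)
  with assms(2) show False
    by linarith
qed

lemma exists_uniform_regular_intersecting_not_balanceable:
  "\<exists>n F. family_on n F \<and> F \<noteq> [] \<and> uniform F \<and> regular n F \<and> intersecting F
     \<and> \<not> balanceable n F"
proof -
  define F :: "nat set list" where "F = [{0,1,2,6,7}, {0,1,2,8,9}, {3,4,5,6,8}, {3,4,5,7,9}]"
  have lt10: "p < 10 \<longleftrightarrow> p \<in> {0..9}" for p :: nat
    by auto
  have "family_on 10 F"
    by (auto simp: family_on_def F_def)
  moreover have "uniform F"
    unfolding uniform_def by (rule exI[of _ 5]) (auto simp: F_def less_Suc_eq)
  moreover have "regular 10 F"
    unfolding regular_def length_filter_conv_card[symmetric]
    by (rule exI[of _ 2]) (auto simp: F_def lt10)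
  moreover have "intersecting F"
    by (auto simp: intersecting_def F_def less_Suc_eq)
  moreover have "\<not> balanceable 10 F"
  proof
    assume "balanceable 10 F"
    then obtain w s where bal: "balancing 10 F w s"
      by (auto simp: balanceable_iff_balancing)
    have "length F = 4" "{..<4} = {0, 1, 2, 3 :: nat}"
      by (auto simp: F_def)
    then have w: "0 \<le> w 0" "0 \<le> w 1" "0 \<le> w 2" "0 \<le> w 3" "w 0 + w 1 + w 2 + w 3 = 1"
      using bal by (simp_all add: balancing_def)
    have "{i. i < length F \<and> F ! i \<inter> {0, 1, 2} \<noteq> {}} = {0, 1}"
      by (auto simp: F_def less_Suc_eq)
    then have "1 / 2 < w 0 + w 1"
      using balancing_card_le_square_weight[OF bal, of "{0, 1, 2}"] w
      by (intro half_lt_of_square_ge) auto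
    moreover have "{i. i < length F \<and> F ! i \<inter> {3, 4, 5} \<noteq> {}} = {2, 3}"
      by (auto simp: F_def less_Suc_eq)
    then have "1 / 2 < w 2 + w 3"
      using balancing_card_le_square_weight[OF bal, of "{3, 4, 5}"] w
      by (intro half_lt_of_square_ge) auto
    ultimately show False
      using w(5) by linarith
  qed
  ultimately show ?thesis
    unfolding F_def by blast
qed

theorem theorem5:
  shows "(\<forall>n F. family_on n F \<and> F \<noteq> [] \<and> symmetric n F \<and> intersecting F
              \<longrightarrow> balanceable n F)
       \<and> (\<exists>n F. family_on n F \<and> uniform F \<and> balanceable n F \<and> \<not> regular n F
              \<and> \<not> symmetric n F)
       \<and> (\<exists>n F. family_on n F \<and> F \<noteq> [] \<and> uniform F \<and> regular n F \<and> intersecting F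
              \<and> \<not> balanceable n F)"
  using symmetric_intersecting_imp_balanceable
    exists_uniform_balanceable_not_regular_not_symmetric
    exists_uniform_regular_intersecting_not_balanceable
  by blast

end
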